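(* Let $f\in R$ with $0\le f\le b\cdot1$ and let $0=s_0<s_1<\dots<s_n=b$ be rationals. Then $$\sum_{i=0}^{n-1}s_i\,(s_i<f<s_{i+1})\;\le\; f\;\le\;\sum_{i=0}^{n-1}s_{i+1}\,(s_i\le f\le s_{i+1}),$$ where $(s_i<f<s_{i+1}):=D(f-s_i)\wedge D(s_{i+1}-f)$ and $(s_i\le f\le s_{i+1}):=(f\ge s_i)\wedge(f\le s_{i+1})$.
   Context: $R$ is a Riesz space over $\mathbb{Q}$ with strong unit $1$; rationals $r$ are identified with $r\cdot1$. $\mathrm{Spec}(R)$ is the distributive lattice generated by $D(a)$, $a\in R$, subject to $D(1)=1$; $D(a)\wedge D(-a)=0$; $D(a+b)\le D(a)\vee D(b)$; $D(a)=0$ if $a\le0$; $D(a\vee b)=D(a)\vee D(b)$. $B$ is the Boolean algebra freely generated by $\mathrm{Spec}(R)$; $(f>r):=D(f-r)$, $(f<r):=D(r-f)$, $(f\le r):=\neg(f>r)$, $(f\ge r):=\neg(f<r)$. A positive simple function is a formal finite sum $\sum_i r_ix_i$ with rationals $r_i\ge0$, $x_i\in B$; for a finite index set $I$, $x_I:=\bigwedge_{i\in I}x_i$ ($x_\emptyset=1$), $r_I:=\sum_{i\in I}r_i$ ($r_\emptyset=0$). For $f\in R$: $\sum_ir_ix_i\le f$ iff $x_I\le(f\ge r_I)$ for every finite index set $I$; $f\le\sum_js_jy_j$ iff $1=\bigvee_J((f\le s_J)\wedge y_J)$, the join over all finite index sets $J$. *)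

theory Defs
  imports Main "HOL-Library.Lattice_Algebras"
begin

definition riesz_space_Q :: "(rat \<Rightarrow> 'r::lattice_ab_group_add \<Rightarrow> 'r) \<Rightarrow> bool" where
  "riesz_space_Q scale \<longleftrightarrow> vector_space scale \<and>
     (\<forall>q x. 0 \<le> q \<longrightarrow> 0 \<le> x \<longrightarrow> 0 \<le> scale q x)"

definition strong_unit :: "(rat \<Rightarrow> 'r::lattice_ab_group_add \<Rightarrow> 'r) \<Rightarrow> 'r \<Rightarrow> bool" where
  "strong_unit scale u \<longleftrightarrow> 0 \<le> u \<and> (\<forall>a. \<exists>n::nat. sup a (- a) \<le> scale (of_nat n) u)"

text \<open>D is an interpretation of the generators D(a) of Spec(R) in a Boolean algebra
  satisfying the defining relations of Spec(R).  Inequalities between Boolean terms in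
  the generators hold in B (the free Boolean algebra over Spec(R)) iff they hold for
  every such interpretation.\<close>
definition spec_rel :: "(rat \<Rightarrow> 'r::lattice_ab_group_add \<Rightarrow> 'r) \<Rightarrow> 'r \<Rightarrow> ('r \<Rightarrow> 'b::boolean_algebra) \<Rightarrow> bool" where
  "spec_rel scale u D \<longleftrightarrow>
     D u = top \<and>
     (\<forall>a. inf (D a) (D (- a)) = bot) \<and>
     (\<forall>a b. D (a + b) \<le> sup (D a) (D b)) \<and>
     (\<forall>a. a \<le> 0 \<longrightarrow> D a = bot) \<and>
     (\<forall>a b. D (sup a b) = sup (D a) (D b))"

text \<open>(f > r), (f < r), (f \<le> r), (f \<ge> r), rationals r identified with r\<cdot>u.\<close>
definition fgt :: "(rat \<Rightarrow> 'r::lattice_ab_group_add \<Rightarrow> 'r) \<Rightarrow> 'r \<Rightarrow> ('r \<Rightarrow> 'b::boolean_algebra) \<Rightarrow> 'r \<Rightarrow> rat \<Rightarrow> 'b" where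
  "fgt scale u D f r = D (f - scale r u)"
definition flt :: "(rat \<Rightarrow> 'r::lattice_ab_group_add \<Rightarrow> 'r) \<Rightarrow> 'r \<Rightarrow> ('r \<Rightarrow> 'b::boolean_algebra) \<Rightarrow> 'r \<Rightarrow> rat \<Rightarrow> 'b" where
  "flt scale u D f r = D (scale r u - f)"
definition fle :: "(rat \<Rightarrow> 'r::lattice_ab_group_add \<Rightarrow> 'r) \<Rightarrow> 'r \<Rightarrow> ('r \<Rightarrow> 'b::boolean_algebra) \<Rightarrow> 'r \<Rightarrow> rat \<Rightarrow> 'b" where
  "fle scale u D f r = - fgt scale u D f r"
definition fge :: "(rat \<Rightarrow> 'r::lattice_ab_group_add \<Rightarrow> 'r) \<Rightarrow> 'r \<Rightarrow> ('r \<Rightarrow> 'b::boolean_algebra) \<Rightarrow> 'r \<Rightarrow> rat \<Rightarrow> 'b" where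
  "fge scale u D f r = - flt scale u D f r"

text \<open>x_I := meet of x_i over i in I (empty meet = top).\<close>
definition bmeet :: "('i \<Rightarrow> 'b::boolean_algebra) \<Rightarrow> 'i set \<Rightarrow> 'b" where
  "bmeet x I = Inf_fin (insert top (x ` I))"

text \<open>Positive simple function with index set Ix, coefficients r and elements x:
  sum_i r_i x_i \<le> f.\<close>
definition simple_le_elem :: "(rat \<Rightarrow> 'r::lattice_ab_group_add \<Rightarrow> 'r) \<Rightarrow> 'r \<Rightarrow> ('r \<Rightarrow> 'b::boolean_algebra)
    \<Rightarrow> 'i set \<Rightarrow> ('i \<Rightarrow> rat) \<Rightarrow> ('i \<Rightarrow> 'b) \<Rightarrow> 'r \<Rightarrow> bool" where
  "simple_le_elem scale u D Ix r x f \<longleftrightarrow>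
     (\<forall>I. I \<subseteq> Ix \<longrightarrow> bmeet x I \<le> fge scale u D f (sum r I))"

text \<open>f \<le> sum_j s_j y_j.\<close>
definition elem_le_simple :: "(rat \<Rightarrow> 'r::lattice_ab_group_add \<Rightarrow> 'r) \<Rightarrow> 'r \<Rightarrow> ('r \<Rightarrow> 'b::boolean_algebra)
    \<Rightarrow> 'r \<Rightarrow> 'i set \<Rightarrow> ('i \<Rightarrow> rat) \<Rightarrow> ('i \<Rightarrow> 'b) \<Rightarrow> bool" where
  "elem_le_simple scale u D f Ix s y \<longleftrightarrow>
     top = Sup_fin ((\<lambda>J. inf (fle scale u D f (sum s J)) (bmeet y J)) ` Pow Ix)"

end

theory Submission
  imports Defs
begin

text \<open>The coefficients (s_i < f < s_{i+1}) of the lower sum are pairwise disjoint, since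
  (f < s_{i+1}) and (f > s_j) are disjoint once s_{i+1} \<le> s_j.  Hence only I = {} and singletons
  need checking, and these reduce to (f \<ge> 0) = 1 and (f > s_i) \<le> (f \<ge> s_i).  For the upper
  sum, (f \<le> s_{k+1}) \<le> (s_k \<le> f \<le> s_{k+1}) \<or> (f < s_k) shows by induction on k that (f \<le> s_k)
  lies below the join, using only the terms J = {} and J = {i}; at k = n the left side is
  (f \<le> b) = 1.\<close>

lemma step_increasing_mono:
  fixes s :: "nat \<Rightarrow> 'a::preorder"
  assumes "\<forall>i<n. s i < s (Suc i)" and "i \<le> j" and "j \<le> n"
  shows "s i \<le> s j"
  using assms(2,3) by (induction j rule: dec_induct)
    (use assms(1) in \<open>auto intro: order_trans[OF _ less_imp_le]\<close>)

lemma riesz_space_Q_scale_zero: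
  assumes "riesz_space_Q scale"
  shows "scale 0 u = 0"
proof -
  from assms interpret vector_space scale by (simp add: riesz_space_Q_def)
  show ?thesis by simp
qed

lemma riesz_space_Q_scale_left_mono:
  assumes "riesz_space_Q scale" and "0 \<le> u" and "a \<le> c"
  shows "scale a u \<le> scale c u"
proof -
  from assms(1) interpret vector_space scale by (simp add: riesz_space_Q_def)
  have "0 \<le> scale (c - a) u" using assms by (simp add: riesz_space_Q_def)
  then show ?thesis by (simp add: scale_left_diff_distrib)
qed

lemma spec_rel_D_nonpos:
  assumes "spec_rel scale u D" and "a \<le> 0"
  shows "D a = bot"
  using assms by (simp add: spec_rel_def)

lemma spec_rel_D_mono:
  assumes "spec_rel scale u D" and "a \<le> c"
  shows "D a \<le> D c"
proof -
  have "D c = sup (D a) (D c)"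
    using assms by (metis spec_rel_def sup.absorb2)
  then show ?thesis by (metis sup.cobounded1)
qed

lemma spec_rel_D_uminus_le_compl:
  assumes "spec_rel scale u D"
  shows "D (- a) \<le> - D a"
  using assms by (simp add: spec_rel_def inf_shunt[symmetric] inf_commute)

lemma flt_le_fle:
  assumes "spec_rel scale u D"
  shows "flt scale u D f r \<le> fle scale u D f r"
  using spec_rel_D_uminus_le_compl[OF assms, of "f - scale r u"]
  by (simp add: flt_def fle_def fgt_def)

lemma fgt_le_fge:
  assumes "spec_rel scale u D"
  shows "fgt scale u D f r \<le> fge scale u D f r"
  using spec_rel_D_uminus_le_compl[OF assms, of "scale r u - f"]
  by (simp add: fgt_def fge_def flt_def compl_le_swap1)

lemma flt_inf_fgt_eq_bot:
  assumes "riesz_space_Q scale" and "0 \<le> u" and "spec_rel scale u D" and "a \<le> c"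
  shows "inf (flt scale u D f a) (fgt scale u D f c) = bot"
proof -
  have "flt scale u D f a \<le> flt scale u D f c"
    unfolding flt_def
    by (intro spec_rel_D_mono[OF assms(3)] diff_right_mono riesz_space_Q_scale_left_mono assms)
  also have "\<dots> \<le> - fgt scale u D f c"
    using spec_rel_D_uminus_le_compl[OF assms(3), of "f - scale c u"]
    by (simp add: flt_def fgt_def)
  finally show ?thesis by (simp add: inf_shunt)
qed

lemma fle_eq_top:
  assumes "spec_rel scale u D" and "f \<le> scale r u"
  shows "fle scale u D f r = top"
  using spec_rel_D_nonpos[OF assms(1)] assms(2) by (simp add: fle_def fgt_def)

lemma fge_zero_eq_top:
  assumes "riesz_space_Q scale" and "spec_rel scale u D" and "0 \<le> f"
  shows "fge scale u D f 0 = top"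
  using spec_rel_D_nonpos[OF assms(2)] assms(3)
  by (simp add: fge_def flt_def riesz_space_Q_scale_zero[OF assms(1)])

lemma fle_le_sup_fge_inf_fle:
  assumes "spec_rel scale u D"
  shows "fle scale u D f c
    \<le> sup (inf (fge scale u D f a) (fle scale u D f c)) (fle scale u D f a)"
proof -
  have "fle scale u D f c \<le> sup (inf (fge scale u D f a) (fle scale u D f c)) (flt scale u D f a)"
    by (simp add: fge_def sup_inf_distrib2)
  also have "\<dots> \<le> sup (inf (fge scale u D f a) (fle scale u D f c)) (fle scale u D f a)"
    using flt_le_fle[OF assms] by (rule sup_mono[OF order_refl])
  finally show ?thesis .
qed

lemma bmeet_empty [simp]: "bmeet x {} = top"
  by (simp add: bmeet_def)

lemma bmeet_singleton [simp]: "bmeet x {i} = x i"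
  by (simp add: bmeet_def)

lemma bmeet_le:
  assumes "finite I" and "i \<in> I"
  shows "bmeet x I \<le> x i"
  unfolding bmeet_def using assms by (intro Inf_fin.coboundedI) auto

lemma simple_le_elem_pairwise_disjoint:
  assumes "finite Ix"
    and disjoint: "\<And>i j. i \<in> Ix \<Longrightarrow> j \<in> Ix \<Longrightarrow> i \<noteq> j \<Longrightarrow> inf (x i) (x j) = bot"
    and "fge scale u D f 0 = top"
    and "\<And>i. i \<in> Ix \<Longrightarrow> x i \<le> fge scale u D f (r i)"
  shows "simple_le_elem scale u D Ix r x f"
  unfolding simple_le_elem_def
proof (intro allI impI)
  fix I assume "I \<subseteq> Ix"
  then have "finite I" using assms(1) finite_subset by blast
  consider "I = {}" | i where "I = {i}" | i j where "i \<in> I" "j \<in> I" "i \<noteq> j"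
    by blast
  then show "bmeet x I \<le> fge scale u D f (sum r I)"
  proof cases
    case 3
    have "bmeet x I \<le> inf (x i) (x j)"
      by (intro le_infI bmeet_le[OF \<open>finite I\<close>] 3)
    also have "\<dots> = bot" using disjoint 3 \<open>I \<subseteq> Ix\<close> by blast
    finally show ?thesis by (rule order_trans) simp
  qed (use assms(3,4) \<open>I \<subseteq> Ix\<close> in auto)
qed

lemma elem_le_simple_interval_cover:
  fixes s :: "nat \<Rightarrow> rat"
  assumes "spec_rel scale u D" and "s 0 = 0" and "f \<le> scale (s n) u"
  shows "elem_le_simple scale u D f {..<n} (\<lambda>i. s (Suc i))
           (\<lambda>i. inf (fge scale u D f (s i)) (fle scale u D f (s (Suc i))))"
proof -
  define y where "y i = inf (fge scale u D f (s i)) (fle scale u D f (s (Suc i)))" for i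
  define C where "C = (\<lambda>J. inf (fle scale u D f (\<Sum>i\<in>J. s (Suc i))) (bmeet y J)) ` Pow {..<n}"
  have "finite C" by (simp add: C_def)
  have "fle scale u D f (s k) \<le> Sup_fin C" if "k \<le> n" for k
    using that
  proof (induction k)
    case 0
    have "fle scale u D f (s 0) \<in> C"
      unfolding C_def by (rule image_eqI[of _ _ "{}"]) (simp_all add: assms(2))
    then show ?case by (rule Sup_fin.coboundedI[OF \<open>finite C\<close>])
  next
    case (Suc k)
    have "y k \<in> C"
      unfolding C_def using Suc.prems
      by (intro image_eqI[of _ _ "{k}"]) (auto simp: y_def inf_aci)
    then have "sup (y k) (fle scale u D f (s k)) \<le> Sup_fin C"
      using Suc Sup_fin.coboundedI[OF \<open>finite C\<close>] by simp
    with fle_le_sup_fge_inf_fle[OF assms(1)] show ?case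
      unfolding y_def by (blast intro: order_trans)
  qed
  then have "top \<le> Sup_fin C"
    using fle_eq_top[OF assms(1,3)] by (metis order_refl)
  then show ?thesis
    unfolding elem_le_simple_def y_def[symmetric] C_def[symmetric] by (simp add: top_unique)
qed

theorem lemma4p8:
  fixes scale :: "rat \<Rightarrow> 'r::lattice_ab_group_add \<Rightarrow> 'r"
    and u :: 'r and D :: "'r \<Rightarrow> 'b::boolean_algebra"
    and f :: 'r and b :: rat and s :: "nat \<Rightarrow> rat" and n :: nat
  assumes "riesz_space_Q scale" and "strong_unit scale u" and "spec_rel scale u D"
    and "0 \<le> f" and "f \<le> scale b u"
    and "s 0 = 0" and "\<forall>i<n. s i < s (Suc i)" and "s n = b"
  shows "simple_le_elem scale u D {..<n} s
           (\<lambda>i. inf (fgt scale u D f (s i)) (flt scale u D f (s (Suc i)))) f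
       \<and> elem_le_simple scale u D f {..<n} (\<lambda>i. s (Suc i))
           (\<lambda>i. inf (fge scale u D f (s i)) (fle scale u D f (s (Suc i))))"
proof
  have "0 \<le> u" using assms(2) by (simp add: strong_unit_def)
  define x where "x i = inf (fgt scale u D f (s i)) (flt scale u D f (s (Suc i)))" for i
  have "inf (x i) (x j) = bot" if "i < j" "j < n" for i j
  proof -
    have "s (Suc i) \<le> s j"
      using that by (intro step_increasing_mono[OF assms(7)]) auto
    then show ?thesis
      using flt_inf_fgt_eq_bot[OF assms(1) \<open>0 \<le> u\<close> assms(3), of "s (Suc i)" "s j" f]
      unfolding x_def by (metis inf.commute inf_bot_left inf_left_commute)
  qed
  then have "inf (x i) (x j) = bot" if "i < n" "j < n" "i \<noteq> j" for i j
    using that by (metis inf.commute linorder_neqE_nat)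
  then show "simple_le_elem scale u D {..<n} s x f"
    using fge_zero_eq_top[OF assms(1,3,4)] fgt_le_fge[OF assms(3)]
    by (intro simple_le_elem_pairwise_disjoint) (auto simp: x_def le_infI1)
  show "elem_le_simple scale u D f {..<n} (\<lambda>i. s (Suc i))
           (\<lambda>i. inf (fge scale u D f (s i)) (fle scale u D f (s (Suc i))))"
    using elem_le_simple_interval_cover[OF assms(3), of s f n] assms(5,6,8) by simp
qed

end
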